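(* Let $\mathcal H$ be a finite-dimensional Hilbert space, $H$ a Hermitian operator on $\mathcal H$, $\beta$ a finite nonzero real number, and $\gamma_{\beta,H}=e^{-\beta H}/\mathrm{Tr}\,e^{-\beta H}$ (a full-rank density operator). For a density operator $\rho$ on $\mathcal H$ define the weight of athermality $$A_w(\rho)=\min_{\tau\in\mathscr D(\mathcal H)}\{a\ge 0:\ \rho=(1-a)\gamma_{\beta,H}+a\tau\}.$$ Then this minimum is attained and $$A_w(\rho)=a:=1-\mu_{\min}\!\left(\gamma_{\beta,H}^{-1/2}\,\rho\,\gamma_{\beta,H}^{-1/2}\right),$$ where $\mu_{\min}$ denotes the smallest eigenvalue; moreover $0\le a\le 1$, with $a=0$ if and only if $\rho=\gamma_{\beta,H}$. If $\rho\neq\gamma_{\beta,H}$, the density operator $\tau$ with $\rho=(1-a)\gamma_{\beta,H}+a\tau$ for this minimal $a$ is unique and equals $\tau=\big(\rho-(1-a)\gamma_{\beta,H}\big)/a$.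
   Context: $\mathscr D(\mathcal H)$ denotes the set of density operators (positive semidefinite, unit trace) on $\mathcal H$. $\gamma^{\pm1/2}$ denote the positive square roots of $\gamma$ and of its inverse. *)

theory Defs
  imports Complex_Main "Jordan_Normal_Form.Matrix" "Jordan_Normal_Form.Char_Poly"
begin

text \<open>Operators on an n-dimensional Hilbert space are n x n complex matrices.\<close>

definition adjoint_mat :: "complex mat \<Rightarrow> complex mat" where
  "adjoint_mat A = mat (dim_col A) (dim_row A) (\<lambda>(i,j). cnj (A $$ (j,i)))"

definition hermitian_mat :: "nat \<Rightarrow> complex mat \<Rightarrow> bool" where
  "hermitian_mat n A \<longleftrightarrow> A \<in> carrier_mat n n \<and> adjoint_mat A = A"

definition psd_mat :: "nat \<Rightarrow> complex mat \<Rightarrow> bool" where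
  "psd_mat n A \<longleftrightarrow> hermitian_mat n A \<and>
     (\<forall>v \<in> carrier_vec n. 0 \<le> Re ((A *\<^sub>v v) \<bullet>c v))"

definition trace_mat :: "complex mat \<Rightarrow> complex" where
  "trace_mat A = (\<Sum>i<dim_row A. A $$ (i,i))"

definition density_mat :: "nat \<Rightarrow> complex mat \<Rightarrow> bool" where
  "density_mat n A \<longleftrightarrow> psd_mat n A \<and> trace_mat A = 1"

definition exp_mat :: "complex mat \<Rightarrow> complex mat" where
  "exp_mat A = mat (dim_row A) (dim_col A)
      (\<lambda>(i,j). \<Sum>k. (A ^\<^sub>m k) $$ (i,j) / of_nat (fact k))"

definition inverse_mat :: "nat \<Rightarrow> complex mat \<Rightarrow> complex mat" where
  "inverse_mat n A = (THE B. B \<in> carrier_mat n n \<and> A * B = 1\<^sub>m n \<and> B * A = 1\<^sub>m n)"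

definition psd_sqrt :: "nat \<Rightarrow> complex mat \<Rightarrow> complex mat" where
  "psd_sqrt n A = (THE S. psd_mat n S \<and> S * S = A)"

definition gibbs_state :: "real \<Rightarrow> complex mat \<Rightarrow> complex mat" where
  "gibbs_state \<beta> H = (1 / trace_mat (exp_mat ((- complex_of_real \<beta>) \<cdot>\<^sub>m H)))
                        \<cdot>\<^sub>m exp_mat ((- complex_of_real \<beta>) \<cdot>\<^sub>m H)"

text \<open>Smallest eigenvalue of a Hermitian matrix (whose eigenvalues are real).\<close>
definition min_eigenvalue :: "complex mat \<Rightarrow> real" where
  "min_eigenvalue M = Min {r::real. eigenvalue M (complex_of_real r)}"

definition athermality_set :: "nat \<Rightarrow> complex mat \<Rightarrow> complex mat \<Rightarrow> real set" where
  "athermality_set n \<gamma> \<rho> = {a. 0 \<le> a \<and> (\<exists>\<tau>. density_mat n \<tau> \<and>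
       \<rho> = complex_of_real (1 - a) \<cdot>\<^sub>m \<gamma> + complex_of_real a \<cdot>\<^sub>m \<tau>)}"

definition weight_of_athermality :: "nat \<Rightarrow> real \<Rightarrow> complex mat \<Rightarrow> complex mat \<Rightarrow> real" where
  "weight_of_athermality n \<beta> H \<rho> = Inf (athermality_set n (gibbs_state \<beta> H) \<rho>)"

end

theory Submission
  imports Defs "Jordan_Normal_Form.Spectral_Radius"
begin

(* Diagonalising H shows that the Gibbs state is \<gamma> = U diag(g) U^* with all g_l > 0, so that
   \<gamma>^(-1/2) = U diag(g^(-1/2)) U^*.  For a > 0 the decomposition \<rho> = (1 - a) \<gamma> + a \<tau> forces
   \<tau> = (\<rho> - (1 - a) \<gamma>) / a, which automatically has trace one, so a is admissible exactly when
   \<rho> - (1 - a) \<gamma> is positive semidefinite.  Since \<rho> - c \<gamma> = \<gamma>^(1/2) (\<gamma>^(-1/2) \<rho> \<gamma>^(-1/2) - c) \<gamma>^(1/2)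
   and congruence by an invertible Hermitian matrix preserves positivity in both directions, this
   holds iff c \<le> \<mu>_min, so the least weight is 1 - \<mu>_min.  Taking traces gives \<mu>_min \<le> 1, with
   equality only if \<rho> - \<gamma> is a positive matrix of trace zero, i.e. \<rho> = \<gamma>. *)

declare index_mult_mat(1)[simp del] index_mult_mat_vec[simp del]

lemma index_mult_mat_sum:
  assumes "i < dim_row A" "j < dim_col B" "dim_col A = dim_row B"
  shows "(A * B) $$ (i,j) = (\<Sum>k<dim_row B. A $$ (i,k) * B $$ (k,j))"
  using assms by (auto simp: index_mult_mat(1) scalar_prod_def atLeast0LessThan intro!: sum.cong)

lemma index_mult_mat_vec_sum:
  assumes "A \<in> carrier_mat n m" "v \<in> carrier_vec m" "i < n"
  shows "(A *\<^sub>v v) $ i = (\<Sum>k<m. A $$ (i,k) * v $ k)"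
  using assms by (auto simp: index_mult_mat_vec scalar_prod_def atLeast0LessThan intro!: sum.cong)

lemma cscalar_prod_sum:
  assumes "v \<in> carrier_vec n" "w \<in> carrier_vec n"
  shows "v \<bullet>c w = (\<Sum>i<n. v $ i * cnj (w $ i))"
  using assms by (auto simp: scalar_prod_def atLeast0LessThan intro!: sum.cong)

lemma cscalar_prod_smult_left:
  assumes "v \<in> carrier_vec n" "w \<in> carrier_vec n"
  shows "(c \<cdot>\<^sub>v v) \<bullet>c w = c * (v \<bullet>c w)"
  using assms by (simp add: cscalar_prod_sum sum_distrib_left mult_ac)

lemma cscalar_prod_smult_right:
  assumes "v \<in> carrier_vec n" "w \<in> carrier_vec n"
  shows "v \<bullet>c (c \<cdot>\<^sub>v w) = cnj c * (v \<bullet>c w)"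
  using assms by (simp add: cscalar_prod_sum sum_distrib_left mult_ac)

lemma cscalar_prod_self_real:
  fixes v :: "complex vec"
  shows "v \<bullet>c v = complex_of_real (Re (v \<bullet>c v))"
  using conjugate_square_ge_0_vec[of v] by (auto simp: less_eq_complex_def complex_eq_iff)

lemma cscalar_prod_self_pos:
  fixes v :: "complex vec"
  assumes "v \<in> carrier_vec n" "v \<noteq> 0\<^sub>v n"
  shows "0 < Re (v \<bullet>c v)"
  using conjugate_square_greater_0_vec[OF assms(1)] assms(2)
  by (auto simp: less_complex_def less_eq_complex_def)

lemma carrier_vec_nonzero_index:
  assumes "v \<in> carrier_vec n" "v \<noteq> 0\<^sub>v n"
  obtains l where "l < n" "v $ l \<noteq> 0"
  using assms by (metis carrier_vecD eq_vecI index_zero_vec)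

lemma mat_diag_dims[simp]: "dim_row (mat_diag n f) = n" "dim_col (mat_diag n f) = n"
  by (simp_all add: mat_diag_def)

lemma mat_diag_mult_vec:
  assumes "v \<in> carrier_vec n"
  shows "mat_diag n f *\<^sub>v v = vec n (\<lambda>i. f i * v $ i)"
  using assms by (intro eq_vecI) (auto simp: index_mult_mat_vec_sum[of _ n n] mat_diag_def
      if_distrib[of "\<lambda>x. x * _"] cong: if_cong)

section \<open>Adjoints and unitary matrices\<close>

lemma adjoint_mat_dim[simp]:
  "dim_row (adjoint_mat A) = dim_col A" "dim_col (adjoint_mat A) = dim_row A"
  by (auto simp: adjoint_mat_def)

lemma adjoint_mat_carrier[simp]: "A \<in> carrier_mat n m \<Longrightarrow> adjoint_mat A \<in> carrier_mat m n"
  by (auto simp: adjoint_mat_def)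

lemma adjoint_mat_index[simp]:
  "i < dim_col A \<Longrightarrow> j < dim_row A \<Longrightarrow> adjoint_mat A $$ (i,j) = cnj (A $$ (j,i))"
  by (auto simp: adjoint_mat_def)

lemma adjoint_mat_adjoint_mat[simp]: "adjoint_mat (adjoint_mat A) = A"
  by (rule eq_matI) auto

lemma adjoint_mat_mult:
  assumes "dim_col A = dim_row B"
  shows "adjoint_mat (A * B) = adjoint_mat B * adjoint_mat A"
  by (rule eq_matI)
    (use assms in \<open>auto simp: index_mult_mat_sum mult.commute intro!: sum.cong\<close>)

lemma adjoint_mat_smult: "adjoint_mat (c \<cdot>\<^sub>m A) = cnj c \<cdot>\<^sub>m adjoint_mat A"
  by (rule eq_matI) auto

lemma adjoint_mat_one[simp]: "adjoint_mat (1\<^sub>m n) = 1\<^sub>m n"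
  by (rule eq_matI) auto

lemma index_adjoint_mult_mat:
  assumes "U \<in> carrier_mat n m" "i < m" "j < m"
  shows "(adjoint_mat U * U) $$ (i,j) = (\<Sum>k<n. cnj (U $$ (k,i)) * U $$ (k,j))"
  using assms by (subst index_mult_mat_sum) auto

lemma cscalar_prod_adjoint:
  assumes A: "A \<in> carrier_mat n m" and v: "v \<in> carrier_vec m" and w: "w \<in> carrier_vec n"
  shows "(A *\<^sub>v v) \<bullet>c w = v \<bullet>c (adjoint_mat A *\<^sub>v w)"
proof -
  have "(A *\<^sub>v v) \<bullet>c w = (\<Sum>i<n. \<Sum>k<m. A $$ (i,k) * v $ k * cnj (w $ i))"
    using assms by (simp add: cscalar_prod_sum[of _ n] index_mult_mat_vec_sum sum_distrib_right)
  also have "\<dots> = (\<Sum>k<m. v $ k * cnj (\<Sum>i<n. cnj (A $$ (i,k)) * w $ i))"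
    by (subst sum.swap) (simp add: sum_distrib_left mult_ac)
  also have "\<dots> = v \<bullet>c (adjoint_mat A *\<^sub>v w)"
    using assms mult_mat_vec_carrier[OF adjoint_mat_carrier[OF A] w]
    by (simp add: cscalar_prod_sum[of _ m] index_mult_mat_vec_sum[of _ m n])
  finally show ?thesis .
qed

lemma hermitian_matD:
  "hermitian_mat n A \<Longrightarrow> A \<in> carrier_mat n n"
  "hermitian_mat n A \<Longrightarrow> adjoint_mat A = A"
  by (auto simp: hermitian_mat_def)

lemma psd_mat_carrier: "psd_mat n A \<Longrightarrow> A \<in> carrier_mat n n"
  by (simp add: psd_mat_def hermitian_mat_def)

definition unitary_mat :: "nat \<Rightarrow> complex mat \<Rightarrow> bool" where
  "unitary_mat n U \<longleftrightarrow> U \<in> carrier_mat n n \<and> adjoint_mat U * U = 1\<^sub>m n \<and> U * adjoint_mat U = 1\<^sub>m n"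

lemma unitary_matD:
  assumes "unitary_mat n U"
  shows "U \<in> carrier_mat n n" "adjoint_mat U \<in> carrier_mat n n"
    "adjoint_mat U * U = 1\<^sub>m n" "U * adjoint_mat U = 1\<^sub>m n"
  using assms by (auto simp: unitary_mat_def)

lemma unitary_matI:
  assumes "U \<in> carrier_mat n n" "adjoint_mat U * U = 1\<^sub>m n"
  shows "unitary_mat n U"
  using assms mat_mult_left_right_inverse[OF adjoint_mat_carrier[OF assms(1)] assms]
  by (simp add: unitary_mat_def)

lemma unitary_cancel_left:
  assumes U: "unitary_mat n U" and X: "dim_row X = n"
  shows "adjoint_mat U * (U * X) = X" "U * (adjoint_mat U * X) = X"
proof -
  have X': "X \<in> carrier_mat n (dim_col X)" using X by auto
  note U = unitary_matD[OF U]
  have "adjoint_mat U * (U * X) = (adjoint_mat U * U) * X" "U * (adjoint_mat U * X) = (U * adjoint_mat U) * X"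
    using assoc_mult_mat[OF U(2) U(1) X'] assoc_mult_mat[OF U(1) U(2) X'] by simp_all
  then show "adjoint_mat U * (U * X) = X" "U * (adjoint_mat U * X) = X" using U X by simp_all
qed

lemma unitary_cancel_right:
  assumes U: "unitary_mat n U" and X: "dim_col X = n"
  shows "X * U * adjoint_mat U = X"
proof -
  have X': "X \<in> carrier_mat (dim_row X) n" using X by auto
  note U = unitary_matD[OF U]
  have "X * U * adjoint_mat U = X * (U * adjoint_mat U)" by (rule assoc_mult_mat[OF X' U(1,2)])
  then show ?thesis using U X by simp
qed

lemma unitary_mat_mult:
  assumes U: "unitary_mat n U" and V: "unitary_mat n V"
  shows "unitary_mat n (U * V)"
proof (rule unitary_matI)
  note U = unitary_matD[OF U] and V = unitary_matD[OF V]
  show "U * V \<in> carrier_mat n n" using U V by simp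
  have "adjoint_mat U * (U * V) = V"
    using U V by (simp add: assoc_mult_mat[symmetric, of _ n n _ n _ n])
  then show "adjoint_mat (U * V) * (U * V) = 1\<^sub>m n"
    using U V by (simp add: adjoint_mat_mult assoc_mult_mat[of _ n n _ n _ n])
qed

lemma unitary_mat_of_orthonormal_cols:
  assumes ws: "set ws \<subseteq> carrier_vec n" "length ws = n"
    and orthonormal: "\<And>i j. i < n \<Longrightarrow> j < n \<Longrightarrow> ws ! i \<bullet>c ws ! j = (if i = j then 1 else 0)"
  shows "unitary_mat n (mat_of_cols n ws)"
proof (rule unitary_matI)
  show U: "mat_of_cols n ws \<in> carrier_mat n n" using ws by (metis mat_of_cols_carrier(1))
  show "adjoint_mat (mat_of_cols n ws) * mat_of_cols n ws = 1\<^sub>m n"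
  proof (rule eq_matI)
    fix i j assume "i < dim_row (1\<^sub>m n :: complex mat)" "j < dim_col (1\<^sub>m n :: complex mat)"
    then have ij: "i < n" "j < n" by auto
    have "(adjoint_mat (mat_of_cols n ws) * mat_of_cols n ws) $$ (i,j)
        = (\<Sum>k<n. (ws ! j) $ k * cnj ((ws ! i) $ k))"
      using ij ws by (auto simp: index_adjoint_mult_mat[OF U] mat_of_cols_index mult.commute
          intro!: sum.cong)
    also have "\<dots> = ws ! j \<bullet>c ws ! i"
      using ij ws by (intro cscalar_prod_sum[symmetric]) auto
    finally show "(adjoint_mat (mat_of_cols n ws) * mat_of_cols n ws) $$ (i,j) = 1\<^sub>m n $$ (i,j)"
      using orthonormal[of j i] ij by auto
  qed (use U in auto)
qed

section \<open>Unitarily diagonal matrices\<close>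

definition spectral_mat :: "nat \<Rightarrow> complex mat \<Rightarrow> (nat \<Rightarrow> complex) \<Rightarrow> complex mat" where
  "spectral_mat n U f = U * mat_diag n f * adjoint_mat U"

context
  fixes n :: nat and U :: "complex mat"
  assumes U: "unitary_mat n U"
begin

private lemmas unitaryU = unitary_matD[OF U]

lemma spectral_mat_carrier[simp]: "spectral_mat n U f \<in> carrier_mat n n"
  using unitaryU unfolding spectral_mat_def by (meson mat_diag_dim mult_carrier_mat)

lemma spectral_mat_dim[simp]: "dim_row (spectral_mat n U f) = n" "dim_col (spectral_mat n U f) = n"
  using spectral_mat_carrier by blast+

lemma spectral_mat_index:
  assumes "i < n" "j < n"
  shows "spectral_mat n U f $$ (i,j) = (\<Sum>k<n. U $$ (i,k) * f k * cnj (U $$ (j,k)))"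
  using assms unitaryU
  by (simp add: spectral_mat_def mat_diag_mult_right[of _ n] index_mult_mat_sum)

lemma spectral_matI:
  assumes "A \<in> carrier_mat n n"
    and "\<And>i j. i < n \<Longrightarrow> j < n \<Longrightarrow> A $$ (i,j) = (\<Sum>k<n. U $$ (i,k) * f k * cnj (U $$ (j,k)))"
  shows "A = spectral_mat n U f"
  by (rule eq_matI) (use assms in \<open>auto simp: spectral_mat_index\<close>)

lemma spectral_mat_cong: "(\<And>i. i < n \<Longrightarrow> f i = g i) \<Longrightarrow> spectral_mat n U f = spectral_mat n U g"
  by (rule spectral_matI) (auto simp: spectral_mat_index)

lemma spectral_mat_mult: "spectral_mat n U f * spectral_mat n U g = spectral_mat n U (\<lambda>i. f i * g i)"
proof -
  have [simp]: "mat_diag n h * adjoint_mat U \<in> carrier_mat n n" for h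
    using unitaryU by (meson mat_diag_dim mult_carrier_mat)
  have "spectral_mat n U f * spectral_mat n U g
      = U * (mat_diag n f * (adjoint_mat U * (U * (mat_diag n g * adjoint_mat U))))"
    using unitaryU by (simp add: spectral_mat_def assoc_mult_mat[of _ n n _ n _ n])
  also have "\<dots> = U * (mat_diag n f * (mat_diag n g * adjoint_mat U))"
    using unitaryU by (simp add: unitary_cancel_left[OF U])
  also have "\<dots> = U * ((mat_diag n f * mat_diag n g) * adjoint_mat U)"
    using unitaryU by (subst assoc_mult_mat[of "mat_diag n f" n n _ n _ n]) auto
  also have "\<dots> = spectral_mat n U (\<lambda>i. f i * g i)"
    using unitaryU by (simp add: spectral_mat_def assoc_mult_mat[of _ n n _ n _ n])
  finally show ?thesis .
qed

lemma spectral_mat_one: "spectral_mat n U (\<lambda>_. 1) = 1\<^sub>m n"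
  using unitaryU by (simp add: spectral_mat_def)

lemma spectral_mat_power: "spectral_mat n U f ^\<^sub>m k = spectral_mat n U (\<lambda>i. f i ^ k)"
proof (induction k)
  case (Suc k)
  have "spectral_mat n U f ^\<^sub>m Suc k = spectral_mat n U (\<lambda>i. f i ^ k * f i)"
    using Suc by (simp add: spectral_mat_mult)
  also have "(\<lambda>i. f i ^ k * f i) = (\<lambda>i. f i ^ Suc k)"
    by (simp add: mult.commute)
  finally show ?case .
qed (simp add: spectral_mat_one)

lemma spectral_mat_smult: "c \<cdot>\<^sub>m spectral_mat n U f = spectral_mat n U (\<lambda>i. c * f i)"
  by (rule spectral_matI) (auto simp: spectral_mat_index sum_distrib_left mult_ac)

lemma spectral_mat_diff: "spectral_mat n U f - spectral_mat n U g = spectral_mat n U (\<lambda>i. f i - g i)"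
  by (rule spectral_matI) (auto simp: spectral_mat_index sum_subtractf[symmetric] algebra_simps)

lemma spectral_mat_adjoint: "adjoint_mat (spectral_mat n U f) = spectral_mat n U (\<lambda>i. cnj (f i))"
  by (rule spectral_matI) (auto simp: spectral_mat_index mult_ac)

lemma spectral_mat_exp: "exp_mat (spectral_mat n U f) = spectral_mat n U (\<lambda>i. exp (f i))"
proof (rule spectral_matI)
  show "exp_mat (spectral_mat n U f) \<in> carrier_mat n n" by (simp add: exp_mat_def)
  have exp_sums: "(\<lambda>k. z ^ k / of_nat (fact k)) sums exp z" for z :: complex
    using exp_converges[of z] by (simp add: scaleR_conv_of_real divide_inverse mult.commute)
  fix i j assume ij: "i < n" "j < n"
  have "exp_mat (spectral_mat n U f) $$ (i,j)
      = (\<Sum>k. \<Sum>l<n. U $$ (i,l) * cnj (U $$ (j,l)) * (f l ^ k / of_nat (fact k)))"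
    using ij by (simp add: exp_mat_def spectral_mat_power spectral_mat_index sum_divide_distrib mult_ac)
  also have "\<dots> = (\<Sum>l<n. U $$ (i,l) * cnj (U $$ (j,l)) * exp (f l))"
    by (rule sums_unique[symmetric], rule sums_sum, rule sums_mult, rule exp_sums)
  finally show "exp_mat (spectral_mat n U f) $$ (i,j) = (\<Sum>k<n. U $$ (i,k) * exp (f k) * cnj (U $$ (j,k)))"
    by (simp add: mult_ac)
qed

lemma spectral_mat_trace: "trace_mat (spectral_mat n U f) = (\<Sum>l<n. f l)"
proof -
  have "trace_mat (spectral_mat n U f) = (\<Sum>i<n. \<Sum>l<n. f l * (cnj (U $$ (i,l)) * U $$ (i,l)))"
    by (simp add: trace_mat_def spectral_mat_index mult_ac)
  also have "\<dots> = (\<Sum>l<n. f l * (\<Sum>i<n. cnj (U $$ (i,l)) * U $$ (i,l)))"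
    by (subst sum.swap) (simp add: sum_distrib_left)
  also have "\<dots> = (\<Sum>l<n. f l * (adjoint_mat U * U) $$ (l,l))"
    using unitaryU(1) by (simp add: index_adjoint_mult_mat)
  finally show ?thesis using unitaryU by simp
qed

lemma spectral_mat_mult_unitary: "spectral_mat n U f * U = U * mat_diag n f"
proof -
  have "spectral_mat n U f * U = U * mat_diag n f * (adjoint_mat U * U)"
    unfolding spectral_mat_def using unitaryU by (intro assoc_mult_mat[of _ n n _ n _ n]) auto
  then show ?thesis using unitaryU by (simp add: right_mult_one_mat[of _ n n] mult_carrier_mat[of _ n n])
qed

lemma adjoint_unitary_mult_spectral_mat: "adjoint_mat U * spectral_mat n U f = mat_diag n f * adjoint_mat U"
  unfolding spectral_mat_def using unitaryU
  by (simp add: assoc_mult_mat[of _ n n _ n _ n] mult_carrier_mat[of _ n n] unitary_cancel_left[OF U])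

lemma spectral_mat_col_eigenvector:
  assumes l: "l < n"
  shows "spectral_mat n U f *\<^sub>v col U l = f l \<cdot>\<^sub>v col U l"
proof -
  have "spectral_mat n U f *\<^sub>v col U l = col (U * mat_diag n f) l"
    using unitaryU l by (simp add: col_mult2[of _ n n _ n] flip: spectral_mat_mult_unitary)
  also have "\<dots> = f l \<cdot>\<^sub>v col U l"
    using unitaryU l by (intro eq_vecI) (auto simp: mat_diag_mult_right[of _ n])
  finally show ?thesis .
qed

lemma unitary_col_unit: "l < n \<Longrightarrow> col U l \<bullet>c col U l = 1"
  using unitaryU index_adjoint_mult_mat[OF unitaryU(1), of l l]
  by (simp add: cscalar_prod_sum[of _ n] mult.commute)

lemma spectral_mat_quadratic_form:
  assumes v: "v \<in> carrier_vec n"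
  shows "(spectral_mat n U f *\<^sub>v v) \<bullet>c v
    = (\<Sum>l<n. f l * ((adjoint_mat U *\<^sub>v v) $ l * cnj ((adjoint_mat U *\<^sub>v v) $ l)))"
proof -
  define w where "w = adjoint_mat U *\<^sub>v v"
  have w: "w \<in> carrier_vec n" using mult_mat_vec_carrier[OF unitaryU(2) v] by (simp add: w_def)
  have "spectral_mat n U f *\<^sub>v v = (U * mat_diag n f) *\<^sub>v w"
    unfolding spectral_mat_def w_def using unitaryU v
    by (intro assoc_mult_mat_vec[of _ n n _ n]) (auto intro: mult_carrier_mat)
  also have "\<dots> = U *\<^sub>v (mat_diag n f *\<^sub>v w)"
    using unitaryU w by (intro assoc_mult_mat_vec[of _ n n _ n]) auto
  finally have "spectral_mat n U f *\<^sub>v v = U *\<^sub>v (mat_diag n f *\<^sub>v w)" .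
  then have "(spectral_mat n U f *\<^sub>v v) \<bullet>c v = (mat_diag n f *\<^sub>v w) \<bullet>c w"
    using cscalar_prod_adjoint[OF unitaryU(1) mult_mat_vec_carrier[OF mat_diag_dim w] v]
    by (simp add: w_def)
  also have "\<dots> = (\<Sum>l<n. f l * (w $ l * cnj (w $ l)))"
    using w by (simp add: mat_diag_mult_vec cscalar_prod_sum[of _ n] mult_ac)
  finally show ?thesis by (simp add: w_def)
qed

lemma hermitian_spectral_mat: "hermitian_mat n (spectral_mat n U (\<lambda>i. complex_of_real (d i)))"
  using spectral_mat_adjoint[of "\<lambda>i. complex_of_real (d i)"] by (simp add: hermitian_mat_def)

lemma psd_spectral_mat_iff:
  "psd_mat n (spectral_mat n U (\<lambda>i. complex_of_real (d i))) \<longleftrightarrow> (\<forall>l<n. 0 \<le> d l)"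
proof
  assume psd: "psd_mat n (spectral_mat n U (\<lambda>i. complex_of_real (d i)))"
  show "\<forall>l<n. 0 \<le> d l"
  proof (intro allI impI)
    fix l assume l: "l < n"
    have "0 \<le> Re ((spectral_mat n U (\<lambda>i. complex_of_real (d i)) *\<^sub>v col U l) \<bullet>c col U l)"
      using psd unitaryU l by (simp add: psd_mat_def)
    also have "\<dots> = d l"
      using unitaryU l by (simp add: spectral_mat_col_eigenvector cscalar_prod_smult_left[of _ n] unitary_col_unit)
    finally show "0 \<le> d l" .
  qed
next
  assume d: "\<forall>l<n. 0 \<le> d l"
  show "psd_mat n (spectral_mat n U (\<lambda>i. complex_of_real (d i)))"
    unfolding psd_mat_def
  proof (intro conjI hermitian_spectral_mat ballI)
    fix v :: "complex vec" assume v: "v \<in> carrier_vec n"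
    show "0 \<le> Re ((spectral_mat n U (\<lambda>i. complex_of_real (d i)) *\<^sub>v v) \<bullet>c v)"
      using d by (auto simp: spectral_mat_quadratic_form[OF v] complex_mult_cnj intro!: sum_nonneg)
  qed
qed

lemma eigenvalues_spectral_mat:
  "{r. eigenvalue (spectral_mat n U (\<lambda>i. complex_of_real (d i))) (complex_of_real r)} = d ` {..<n}"
proof (intro equalityI subsetI)
  let ?M = "spectral_mat n U (\<lambda>i. complex_of_real (d i))"
  fix r assume "r \<in> d ` {..<n}"
  then obtain l where l: "l < n" and r: "r = d l" by auto
  have "col U l \<in> carrier_vec n" using unitaryU l by simp
  then have "col U l \<noteq> 0\<^sub>v n" using unitary_col_unit[OF l] conjugate_square_eq_0_vec by fastforce
  then have "eigenvector ?M (col U l) (complex_of_real r)"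
    using unitaryU l r by (simp add: eigenvector_def spectral_mat_col_eigenvector)
  then show "r \<in> {r. eigenvalue ?M (complex_of_real r)}" by (auto simp: eigenvalue_def)
next
  let ?D = "mat_diag n (\<lambda>i. complex_of_real (d i))"
  let ?M = "spectral_mat n U (\<lambda>i. complex_of_real (d i))"
  fix r assume "r \<in> {r. eigenvalue ?M (complex_of_real r)}"
  then obtain x where x: "x \<in> carrier_vec n" "x \<noteq> 0\<^sub>v n" and Mx: "?M *\<^sub>v x = complex_of_real r \<cdot>\<^sub>v x"
    by (auto simp: eigenvalue_def eigenvector_def)
  define w where "w = adjoint_mat U *\<^sub>v x"
  have w: "w \<in> carrier_vec n" using mult_mat_vec_carrier[OF unitaryU(2) x(1)] by (simp add: w_def)
  have "U *\<^sub>v w = x" using unitaryU x by (simp add: w_def assoc_mult_mat_vec[symmetric, of _ n n _ n])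
  moreover have "U *\<^sub>v 0\<^sub>v n = 0\<^sub>v n" using unitaryU(1) by (intro eq_vecI) (auto simp: index_mult_mat_vec)
  ultimately have "w \<noteq> 0\<^sub>v n" using x by auto
  then obtain l where l: "l < n" and wl: "w $ l \<noteq> 0" by (rule carrier_vec_nonzero_index[OF w])
  have "?D *\<^sub>v w = (adjoint_mat U * ?M) *\<^sub>v x"
    using unitaryU x by (simp add: adjoint_unitary_mult_spectral_mat w_def assoc_mult_mat_vec[of _ n n _ n])
  also have "\<dots> = complex_of_real r \<cdot>\<^sub>v w"
    using unitaryU x by (simp add: Mx w_def assoc_mult_mat_vec[of _ n n _ n] mult_mat_vec[OF unitaryU(2) x(1)])
  finally have "(?D *\<^sub>v w) $ l = complex_of_real r * w $ l" using w l by simp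
  moreover have "(?D *\<^sub>v w) $ l = complex_of_real (d l) * w $ l"
    using w l by (simp add: mat_diag_mult_vec)
  ultimately have "d l = r" using wl by simp
  then show "r \<in> d ` {..<n}" using l by auto
qed

lemma min_eigenvalue_spectral_mat:
  "min_eigenvalue (spectral_mat n U (\<lambda>i. complex_of_real (d i))) = Min (d ` {..<n})"
  unfolding min_eigenvalue_def eigenvalues_spectral_mat ..

end

section \<open>The spectral theorem for Hermitian matrices\<close>

definition vec_normalize :: "complex vec \<Rightarrow> complex vec" where
  "vec_normalize v = complex_of_real (1 / sqrt (Re (v \<bullet>c v))) \<cdot>\<^sub>v v"

lemma vec_normalize_carrier[simp]: "v \<in> carrier_vec n \<Longrightarrow> vec_normalize v \<in> carrier_vec n"
  by (simp add: vec_normalize_def)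

lemma cscalar_prod_vec_normalize:
  assumes v: "v \<in> carrier_vec n" and w: "w \<in> carrier_vec n"
  shows "vec_normalize v \<bullet>c vec_normalize w
    = complex_of_real (1 / (sqrt (Re (v \<bullet>c v)) * sqrt (Re (w \<bullet>c w)))) * (v \<bullet>c w)"
  using assms by (simp add: vec_normalize_def cscalar_prod_smult_left[of _ n] cscalar_prod_smult_right[of _ n])

lemma vec_normalize_unit:
  assumes v: "v \<in> carrier_vec n" "v \<noteq> 0\<^sub>v n"
  shows "vec_normalize v \<bullet>c vec_normalize v = 1"
proof -
  define r where "r = Re (v \<bullet>c v)"
  have r: "0 < r" unfolding r_def by (rule cscalar_prod_self_pos[OF v])
  have "vec_normalize v \<bullet>c vec_normalize v = complex_of_real (1 / (sqrt r * sqrt r) * r)"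
    using cscalar_prod_self_real[of v]
    by (simp add: cscalar_prod_vec_normalize[OF v(1) v(1)] r_def[symmetric])
  also have "1 / (sqrt r * sqrt r) * r = 1" using r by simp
  finally show ?thesis by simp
qed

lemma vec_normalize_unit_id: "v \<bullet>c v = 1 \<Longrightarrow> vec_normalize v = v"
  by (simp add: vec_normalize_def)

lemma hermitian_unit_eigenvector:
  assumes A: "hermitian_mat n A" and n: "0 < n"
  obtains u e where "u \<in> carrier_vec n" "u \<bullet>c u = 1" "A *\<^sub>v u = complex_of_real e \<cdot>\<^sub>v u"
proof -
  have A_carrier: "A \<in> carrier_mat n n" and A_adj: "adjoint_mat A = A" using hermitian_matD[OF A] by auto
  obtain c where "eigenvalue A c"
    using spectrum_non_empty[OF A_carrier n] by (auto simp: spectrum_def)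
  then obtain v where v: "v \<in> carrier_vec n" "v \<noteq> 0\<^sub>v n" and Av: "A *\<^sub>v v = c \<cdot>\<^sub>v v"
    using A_carrier by (auto simp: eigenvalue_def eigenvector_def)
  have "c * (v \<bullet>c v) = cnj c * (v \<bullet>c v)"
    using cscalar_prod_adjoint[OF A_carrier v(1) v(1)] A_adj v(1) Av
    by (simp add: cscalar_prod_smult_left[of _ n] cscalar_prod_smult_right[of _ n])
  then have c_real: "c = complex_of_real (Re c)"
    using cscalar_prod_self_pos[OF v(1,2)] by (auto simp: complex_eq_iff)
  show ?thesis
  proof
    show "vec_normalize v \<in> carrier_vec n" "vec_normalize v \<bullet>c vec_normalize v = 1"
      using v by (simp_all add: vec_normalize_unit)
    show "A *\<^sub>v vec_normalize v = complex_of_real (Re c) \<cdot>\<^sub>v vec_normalize v"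
      using A_carrier v Av c_real
      by (simp add: vec_normalize_def mult_mat_vec[OF A_carrier v(1)] smult_smult_assoc mult.commute)
  qed
qed

lemma orthonormal_vec_normalize:
  assumes vs: "corthogonal vs" "set vs \<subseteq> carrier_vec n" and ij: "i < length vs" "j < length vs"
  shows "map vec_normalize vs ! i \<bullet>c map vec_normalize vs ! j = (if i = j then 1 else 0)"
proof -
  have vi: "vs ! i \<in> carrier_vec n" and vj: "vs ! j \<in> carrier_vec n" using vs(2) ij by auto
  show ?thesis
  proof (cases "i = j")
    case True
    have "vs ! i \<noteq> 0\<^sub>v n" using corthogonalD[OF vs(1) ij(1) ij(1)] vi by auto
    then show ?thesis using True ij vec_normalize_unit[OF vi] by simp
  next
    case False
    then show ?thesis
      using corthogonalD[OF vs(1) ij] ij by (simp add: cscalar_prod_vec_normalize[OF vi vj])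
  qed
qed

lemma unitary_mat_with_first_col:
  assumes u: "u \<in> carrier_vec n" "u \<bullet>c u = 1"
  obtains U where "unitary_mat n U" "col U 0 = u"
proof -
  have u0: "u \<noteq> 0\<^sub>v n" using u by auto
  interpret cof_vec_space n "TYPE(complex)" .
  define b where "b = basis_completion u"
  have b: "set b \<subseteq> carrier_vec n" "distinct b" "\<not> lin_dep (set b)" "length b = n" "hd b = u"
    using basis_completion[OF u(1) u0] by (simp_all add: b_def)
  have "n \<noteq> 0" using u u0 by auto
  then obtain bs where b_Cons: "b = u # bs" using b(4,5) by (cases b) auto
  define gs where "gs = gram_schmidt n b"
  have gs: "corthogonal gs" "set gs \<subseteq> carrier_vec n" "length gs = n" "hd gs = u"
    using gram_schmidt_result[OF b(1-3) gs_def] b u(1) by (simp_all add: gs_def b_Cons)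
  define ws where "ws = map vec_normalize gs"
  have ws: "set ws \<subseteq> carrier_vec n" "length ws = n" using gs by (auto simp: ws_def)
  have "unitary_mat n (mat_of_cols n ws)"
    using orthonormal_vec_normalize[OF gs(1,2)] gs(3) ws
    by (intro unitary_mat_of_orthonormal_cols) (simp_all add: ws_def)
  moreover have "col (mat_of_cols n ws) 0 = u"
    using gs \<open>n \<noteq> 0\<close> ws u by (cases gs) (auto simp: ws_def vec_normalize_unit_id)
  ultimately show ?thesis by (rule that)
qed

definition direct_sum_one :: "'a :: {zero,one} mat \<Rightarrow> 'a mat" where
  "direct_sum_one W = mat (Suc (dim_row W)) (Suc (dim_col W))
     (\<lambda>(i,j). if i = 0 \<or> j = 0 then (if i = j then 1 else 0) else W $$ (i - 1, j - 1))"

lemma direct_sum_one_carrier: "W \<in> carrier_mat n m \<Longrightarrow> direct_sum_one W \<in> carrier_mat (Suc n) (Suc m)"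
  by (simp add: direct_sum_one_def)

lemma index_direct_sum_one:
  "i < Suc (dim_row W) \<Longrightarrow> j < Suc (dim_col W) \<Longrightarrow>
   direct_sum_one W $$ (i,j) = (if i = 0 \<or> j = 0 then (if i = j then 1 else 0) else W $$ (i - 1, j - 1))"
  by (simp add: direct_sum_one_def)

lemma unitary_direct_sum_one:
  assumes W: "unitary_mat n W"
  shows "unitary_mat (Suc n) (direct_sum_one W)"
proof (rule unitary_matI)
  let ?V = "direct_sum_one W"
  note W = unitary_matD[OF W]
  show V: "?V \<in> carrier_mat (Suc n) (Suc n)" using W by (simp add: direct_sum_one_carrier)
  show "adjoint_mat ?V * ?V = 1\<^sub>m (Suc n)"
  proof (rule eq_matI)
    fix i j assume "i < dim_row (1\<^sub>m (Suc n) :: complex mat)" "j < dim_col (1\<^sub>m (Suc n) :: complex mat)"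
    then have ij: "i < Suc n" "j < Suc n" by auto
    have "(adjoint_mat ?V * ?V) $$ (i,j)
        = cnj (?V $$ (0,i)) * ?V $$ (0,j) + (\<Sum>k<n. cnj (?V $$ (Suc k,i)) * ?V $$ (Suc k,j))"
      using index_adjoint_mult_mat[OF V ij] unfolding sum.lessThan_Suc_shift .
    also have "\<dots> = 1\<^sub>m (Suc n) $$ (i,j)"
    proof (cases "i = 0 \<or> j = 0")
      case True
      then show ?thesis using ij W by (auto simp: index_direct_sum_one)
    next
      case False
      then obtain i' j' where ij': "i = Suc i'" "j = Suc j'" by (cases i; cases j) auto
      then have "(\<Sum>k<n. cnj (?V $$ (Suc k,i)) * ?V $$ (Suc k,j)) = (adjoint_mat W * W) $$ (i',j')"
        using ij W(1) by (simp add: index_direct_sum_one index_adjoint_mult_mat)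
      then show ?thesis using ij ij' W by (simp add: index_direct_sum_one)
    qed
    finally show "(adjoint_mat ?V * ?V) $$ (i,j) = 1\<^sub>m (Suc n) $$ (i,j)" .
  qed (use V in auto)
qed

lemma spectral_mat_direct_sum_one:
  assumes W: "unitary_mat n W" and ij: "i < Suc n" "j < Suc n"
  shows "spectral_mat (Suc n) (direct_sum_one W) f $$ (i,j) =
    (if i = 0 \<or> j = 0 then (if i = j then f 0 else 0)
     else spectral_mat n W (\<lambda>k. f (Suc k)) $$ (i - 1, j - 1))"
proof -
  let ?V = "direct_sum_one W"
  note W' = unitary_matD[OF W]
  have "spectral_mat (Suc n) ?V f $$ (i,j)
      = ?V $$ (i,0) * f 0 * cnj (?V $$ (j,0)) + (\<Sum>k<n. ?V $$ (i,Suc k) * f (Suc k) * cnj (?V $$ (j,Suc k)))"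
    using spectral_mat_index[OF unitary_direct_sum_one[OF W] ij] unfolding sum.lessThan_Suc_shift .
  then show ?thesis
    using ij W' by (cases i; cases j) (auto simp: index_direct_sum_one spectral_mat_index[OF W])
qed

lemma hermitian_deflation:
  assumes A: "hermitian_mat n A" and U: "unitary_mat n U" and n: "0 < n"
    and ev: "A *\<^sub>v col U 0 = complex_of_real e \<cdot>\<^sub>v col U 0"
  defines "A' \<equiv> adjoint_mat U * A * U"
  shows "hermitian_mat n A'"
    and "i < n \<Longrightarrow> A' $$ (i,0) = (if i = 0 then complex_of_real e else 0)"
    and "i < n \<Longrightarrow> A' $$ (0,i) = (if i = 0 then complex_of_real e else 0)"
proof -
  note U = unitary_matD[OF U] and A = hermitian_matD[OF A]
  show herm: "hermitian_mat n A'"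
    using U A by (simp add: hermitian_mat_def A'_def adjoint_mat_mult assoc_mult_mat[of _ n n _ n _ n]
        mult_carrier_mat[of _ n n])
  have "col A' 0 = (adjoint_mat U * A) *\<^sub>v col U 0"
    unfolding A'_def by (rule col_mult2[OF mult_carrier_mat[OF U(2) A(1)] U(1) n])
  also have "\<dots> = adjoint_mat U *\<^sub>v (A *\<^sub>v col U 0)"
    by (rule assoc_mult_mat_vec[OF U(2) A(1) col_carrier_vec[OF n U(1)]])
  also have "\<dots> = complex_of_real e \<cdot>\<^sub>v (adjoint_mat U *\<^sub>v col U 0)"
    by (simp add: ev mult_mat_vec[OF U(2) col_carrier_vec[OF n U(1)]])
  also have "adjoint_mat U *\<^sub>v col U 0 = unit_vec n 0"
    using col_mult2[OF U(2) U(1) n] U n by simp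
  finally have col0: "col A' 0 = complex_of_real e \<cdot>\<^sub>v unit_vec n 0" .
  show first_col: "A' $$ (i,0) = (if i = 0 then complex_of_real e else 0)" if "i < n" for i
    using arg_cong[OF col0, of "\<lambda>v. v $ i"] that n hermitian_matD(1)[OF herm] by simp
  show "A' $$ (0,i) = (if i = 0 then complex_of_real e else 0)" if "i < n" for i
    using arg_cong[OF hermitian_matD(2)[OF herm], of "\<lambda>M. M $$ (0,i)"] first_col[OF that]
      hermitian_matD(1)[OF herm] that n
    by auto
qed

lemma spectral_mat_unitary_conj:
  assumes U: "unitary_mat n U" and V: "unitary_mat n V" and A: "A \<in> carrier_mat n n"
    and diag: "adjoint_mat U * A * U = spectral_mat n V f"
  shows "A = spectral_mat n (U * V) f"
proof -
  note U = unitary_matD[OF U] and V' = unitary_matD[OF V]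
  have "spectral_mat n (U * V) f = U * spectral_mat n V f * adjoint_mat U"
    using U V' by (simp add: spectral_mat_def adjoint_mat_mult assoc_mult_mat[of _ n n _ n _ n]
        mult_carrier_mat[of _ n n])
  also have "\<dots> = U * (adjoint_mat U * (A * (U * adjoint_mat U)))"
    using U A by (simp add: diag[symmetric] assoc_mult_mat[of _ n n _ n _ n] mult_carrier_mat[of _ n n])
  also have "\<dots> = A"
    using U A unitary_cancel_left(2)[OF assms(1)] by simp
  finally show ?thesis ..
qed

definition lower_right_block :: "'a mat \<Rightarrow> 'a mat" where
  "lower_right_block A = mat (dim_row A - 1) (dim_col A - 1) (\<lambda>(i,j). A $$ (Suc i, Suc j))"

lemma hermitian_lower_right_block:
  assumes "hermitian_mat (Suc n) A"
  shows "hermitian_mat n (lower_right_block A)"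
proof -
  note A = hermitian_matD[OF assms]
  have "adjoint_mat (lower_right_block A) $$ (i,j) = lower_right_block A $$ (i,j)" if "i < n" "j < n" for i j
    using arg_cong[OF A(2), of "\<lambda>M. M $$ (Suc i, Suc j)"] A(1) that by (simp add: lower_right_block_def)
  then show ?thesis
    using A(1) by (auto simp: hermitian_mat_def lower_right_block_def intro!: eq_matI)
qed

lemma spectral_mat_direct_sum_oneI:
  assumes W: "unitary_mat n W" and A: "A \<in> carrier_mat (Suc n) (Suc n)"
    and first_col: "\<And>i. i < Suc n \<Longrightarrow> A $$ (i,0) = (if i = 0 then f 0 else 0)"
    and first_row: "\<And>j. j < Suc n \<Longrightarrow> A $$ (0,j) = (if j = 0 then f 0 else 0)"
    and block: "lower_right_block A = spectral_mat n W (\<lambda>k. f (Suc k))"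
  shows "A = spectral_mat (Suc n) (direct_sum_one W) f"
proof (rule eq_matI)
  fix i j assume "i < dim_row (spectral_mat (Suc n) (direct_sum_one W) f)"
    "j < dim_col (spectral_mat (Suc n) (direct_sum_one W) f)"
  then have ij: "i < Suc n" "j < Suc n" using unitary_direct_sum_one[OF W] by auto
  show "A $$ (i,j) = spectral_mat (Suc n) (direct_sum_one W) f $$ (i,j)"
    unfolding spectral_mat_direct_sum_one[OF W ij] block[symmetric]
    using ij A first_col first_row by (cases i; cases j) (auto simp: lower_right_block_def)
qed (use A unitary_direct_sum_one[OF W] in auto)

theorem hermitian_spectral_decomposition:
  "hermitian_mat n A \<Longrightarrow> \<exists>U d. unitary_mat n U \<and> A = spectral_mat n U (\<lambda>i. complex_of_real (d i))"
proof (induction n arbitrary: A)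
  case 0
  have U: "unitary_mat 0 (1\<^sub>m 0)" by (simp add: unitary_mat_def)
  moreover have "A = spectral_mat 0 (1\<^sub>m 0) (\<lambda>_. complex_of_real 0)"
    using hermitian_matD(1)[OF "0.prems"] spectral_mat_dim[OF U] by (intro eq_matI) auto
  ultimately show ?case by (intro exI[of _ "1\<^sub>m 0"] exI[of _ "\<lambda>_. 0"] conjI)
next
  case (Suc n)
  obtain u e where u: "u \<in> carrier_vec (Suc n)" "u \<bullet>c u = 1"
    and ev: "A *\<^sub>v u = complex_of_real e \<cdot>\<^sub>v u"
    using hermitian_unit_eigenvector[OF Suc.prems] by blast
  obtain U where U: "unitary_mat (Suc n) U" and col: "col U 0 = u"
    using unitary_mat_with_first_col[OF u] by blast
  define A' where "A' = adjoint_mat U * A * U"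
  note deflation = hermitian_deflation[OF Suc.prems U _ ev[folded col], folded A'_def, simplified]
  obtain W d where W: "unitary_mat n W"
    and block: "lower_right_block A' = spectral_mat n W (\<lambda>i. complex_of_real (d i))"
    using Suc.IH[OF hermitian_lower_right_block[OF deflation(1)]] by blast
  have "A' = spectral_mat (Suc n) (direct_sum_one W) (\<lambda>i. complex_of_real (case_nat e d i))"
    using deflation(2,3) block hermitian_matD(1)[OF deflation(1)]
    by (intro spectral_mat_direct_sum_oneI[OF W]) auto
  then have "A = spectral_mat (Suc n) (U * direct_sum_one W) (\<lambda>i. complex_of_real (case_nat e d i))"
    using spectral_mat_unitary_conj[OF U unitary_direct_sum_one[OF W] hermitian_matD(1)[OF Suc.prems]]
    by (simp add: A'_def)
  then show ?case using unitary_mat_mult[OF U unitary_direct_sum_one[OF W]] by blast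
qed

section \<open>Positive semidefinite matrices\<close>

lemma psd_mat_congruence:
  assumes X: "psd_mat n X" and R: "R \<in> carrier_mat n n"
  shows "psd_mat n (adjoint_mat R * X * R)"
proof -
  have Xc: "X \<in> carrier_mat n n" "adjoint_mat X = X" using X by (auto simp: psd_mat_def hermitian_mat_def)
  have "hermitian_mat n (adjoint_mat R * X * R)"
    using R Xc by (simp add: hermitian_mat_def adjoint_mat_mult assoc_mult_mat[of _ n n _ n _ n]
        mult_carrier_mat[of _ n n])
  moreover have "0 \<le> Re ((adjoint_mat R * X * R *\<^sub>v v) \<bullet>c v)" if v: "v \<in> carrier_vec n" for v
  proof -
    have Rv: "R *\<^sub>v v \<in> carrier_vec n" using R v by simp
    have "adjoint_mat R * X * R *\<^sub>v v = adjoint_mat R *\<^sub>v (X *\<^sub>v (R *\<^sub>v v))"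
      using R Xc v by (simp add: assoc_mult_mat_vec[of _ n n _ n] mult_carrier_mat[of _ n n])
    then have "(adjoint_mat R * X * R *\<^sub>v v) \<bullet>c v = (X *\<^sub>v (R *\<^sub>v v)) \<bullet>c (R *\<^sub>v v)"
      using cscalar_prod_adjoint[OF adjoint_mat_carrier[OF R] mult_mat_vec_carrier[OF Xc(1) Rv] v]
      by simp
    then show ?thesis using X Rv by (simp add: psd_mat_def)
  qed
  ultimately show ?thesis by (simp add: psd_mat_def)
qed

lemma psd_congruence_iff:
  assumes "hermitian_mat n R" "hermitian_mat n S"
    and RS: "R * S = 1\<^sub>m n" "S * R = 1\<^sub>m n" and X: "X \<in> carrier_mat n n"
  shows "psd_mat n (R * X * R) \<longleftrightarrow> psd_mat n X"
proof -
  note R = hermitian_matD[OF assms(1)] and S = hermitian_matD[OF assms(2)]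
  have "S * (R * X * R) * S = (S * R) * X * (R * S)"
    using R S X by (simp add: assoc_mult_mat[of _ n n _ n _ n] mult_carrier_mat[of _ n n])
  then have "S * (R * X * R) * S = X" using RS X by simp
  then show ?thesis using psd_mat_congruence[OF _ S(1)] psd_mat_congruence[OF _ R(1)] R(2) S(2) by metis
qed

lemma psd_mat_smult:
  assumes c: "0 \<le> c" and X: "psd_mat n X"
  shows "psd_mat n (complex_of_real c \<cdot>\<^sub>m X)"
proof -
  have Xc: "X \<in> carrier_mat n n" "adjoint_mat X = X" using X by (auto simp: psd_mat_def hermitian_mat_def)
  have "hermitian_mat n (complex_of_real c \<cdot>\<^sub>m X)"
    using Xc by (simp add: hermitian_mat_def adjoint_mat_smult)
  moreover have "0 \<le> Re (((complex_of_real c \<cdot>\<^sub>m X) *\<^sub>v v) \<bullet>c v)" if v: "v \<in> carrier_vec n" for v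
  proof -
    have "(complex_of_real c \<cdot>\<^sub>m X) *\<^sub>v v = complex_of_real c \<cdot>\<^sub>v (X *\<^sub>v v)"
      using Xc v by (intro eq_vecI) (auto simp: index_mult_mat_vec_sum[of _ n n] sum_distrib_left mult.assoc)
    moreover have "0 \<le> Re ((X *\<^sub>v v) \<bullet>c v)" using X v by (simp add: psd_mat_def)
    ultimately show ?thesis
      using Xc v c by (simp add: cscalar_prod_smult_left[OF mult_mat_vec_carrier[OF Xc(1) v] v])
  qed
  ultimately show ?thesis by (simp add: psd_mat_def)
qed

lemma trace_mat_diff:
  "A \<in> carrier_mat n n \<Longrightarrow> B \<in> carrier_mat n n \<Longrightarrow> trace_mat (A - B) = trace_mat A - trace_mat B"
  by (simp add: trace_mat_def sum_subtractf)

lemma trace_mat_smult: "A \<in> carrier_mat n n \<Longrightarrow> trace_mat (c \<cdot>\<^sub>m A) = c * trace_mat A"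
  unfolding trace_mat_def sum_distrib_left by (intro sum.cong) auto

lemma psd_mat_trace:
  assumes X: "psd_mat n X"
  shows "0 \<le> Re (trace_mat X)" and "trace_mat X = 0 \<Longrightarrow> X = 0\<^sub>m n n"
proof -
  obtain U d where U: "unitary_mat n U" and Xd: "X = spectral_mat n U (\<lambda>i. complex_of_real (d i))"
    using hermitian_spectral_decomposition X unfolding psd_mat_def by blast
  have d: "\<forall>l\<in>{..<n}. 0 \<le> d l" using X psd_spectral_mat_iff[OF U] Xd by simp
  have tr: "trace_mat X = complex_of_real (\<Sum>l<n. d l)" using spectral_mat_trace[OF U] Xd by simp
  show "0 \<le> Re (trace_mat X)" using d tr sum_nonneg[of "{..<n}" d] by simp
  assume "trace_mat X = 0"
  then have "(\<Sum>l<n. d l) = 0" using tr by (metis of_real_eq_0_iff)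
  then have "\<forall>l\<in>{..<n}. d l = 0" using d sum_nonneg_eq_0_iff[of "{..<n}" d] by blast
  then show "X = 0\<^sub>m n n" unfolding Xd using U by (intro eq_matI) (auto simp: spectral_mat_index)
qed

lemma psd_minus_scalar_iff:
  assumes M: "hermitian_mat n M" and n: "0 < n"
  shows "psd_mat n (M - complex_of_real c \<cdot>\<^sub>m 1\<^sub>m n) \<longleftrightarrow> c \<le> min_eigenvalue M"
proof -
  obtain V m where V: "unitary_mat n V" and Mm: "M = spectral_mat n V (\<lambda>i. complex_of_real (m i))"
    using hermitian_spectral_decomposition[OF M] by blast
  have shift: "M - complex_of_real c \<cdot>\<^sub>m 1\<^sub>m n = spectral_mat n V (\<lambda>i. complex_of_real (m i - c))"
    by (simp add: Mm spectral_mat_one[OF V, symmetric] spectral_mat_smult[OF V] spectral_mat_diff[OF V])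
  show ?thesis
    unfolding shift psd_spectral_mat_iff[OF V] unfolding Mm min_eigenvalue_spectral_mat[OF V]
    using n by (auto simp: lessThan_empty_iff)
qed

lemma psd_minus_smult_square_iff:
  assumes R: "hermitian_mat n R" and S: "hermitian_mat n S" and RS: "R * S = 1\<^sub>m n" "S * R = 1\<^sub>m n"
    and \<rho>: "hermitian_mat n \<rho>" and n: "0 < n"
  shows "psd_mat n (\<rho> - complex_of_real c \<cdot>\<^sub>m (R * R)) \<longleftrightarrow> c \<le> min_eigenvalue (S * \<rho> * S)"
proof -
  define M where "M = S * \<rho> * S"
  note Rc = hermitian_matD[OF R] and Sc = hermitian_matD[OF S] and \<rho>c = hermitian_matD[OF \<rho>]
  have Mc: "M \<in> carrier_mat n n" using Sc \<rho>c by (simp add: M_def mult_carrier_mat[of _ n n])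
  have M: "hermitian_mat n M"
    using Sc \<rho>c Mc by (simp add: hermitian_mat_def M_def adjoint_mat_mult assoc_mult_mat[of _ n n _ n _ n]
        mult_carrier_mat[of _ n n])
  have "R * M * R = (R * S) * \<rho> * (S * R)"
    using Rc Sc \<rho>c by (simp add: M_def assoc_mult_mat[of _ n n _ n _ n] mult_carrier_mat[of _ n n])
  then have RMR: "R * M * R = \<rho>" using RS \<rho>c by simp
  have "R * (M - complex_of_real c \<cdot>\<^sub>m 1\<^sub>m n) = R * M - complex_of_real c \<cdot>\<^sub>m R"
    using Rc Mc by (simp add: mult_minus_distrib_mat[of _ n n] mult_smult_distrib[OF Rc(1) one_carrier_mat])
  then have "R * (M - complex_of_real c \<cdot>\<^sub>m 1\<^sub>m n) * R = R * M * R - complex_of_real c \<cdot>\<^sub>m (R * R)"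
    using Rc Mc by (simp add: minus_mult_distrib_mat[of _ n n] mult_smult_assoc_mat[of _ n n]
        mult_carrier_mat[of _ n n])
  then have "R * (M - complex_of_real c \<cdot>\<^sub>m 1\<^sub>m n) * R = \<rho> - complex_of_real c \<cdot>\<^sub>m (R * R)"
    by (simp add: RMR)
  moreover have "M - complex_of_real c \<cdot>\<^sub>m 1\<^sub>m n \<in> carrier_mat n n" using Mc by (simp add: minus_carrier_mat)
  ultimately show ?thesis
    unfolding M_def[symmetric] using psd_congruence_iff[OF R S RS] psd_minus_scalar_iff[OF M n]
    by metis
qed

lemma psd_square_eigenvector:
  assumes T: "psd_mat n T" and u: "u \<in> carrier_vec n" and s: "0 < s"
    and TTu: "T *\<^sub>v (T *\<^sub>v u) = complex_of_real (s * s) \<cdot>\<^sub>v u"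
  shows "T *\<^sub>v u = complex_of_real s \<cdot>\<^sub>v u"
proof -
  have Tc: "T \<in> carrier_mat n n" by (rule psd_mat_carrier[OF T])
  have Tu: "T *\<^sub>v u \<in> carrier_vec n" using Tc u by simp
  define y where "y = T *\<^sub>v u - complex_of_real s \<cdot>\<^sub>v u"
  have y: "y \<in> carrier_vec n" using Tu u by (simp add: y_def)
  \<comment> \<open>T has eigenvalue -s on y, which positivity forbids unless y = 0\<close>
  have "T *\<^sub>v y = complex_of_real (s * s) \<cdot>\<^sub>v u - complex_of_real s \<cdot>\<^sub>v (T *\<^sub>v u)"
    unfolding y_def using Tc Tu u
    by (simp add: mult_minus_distrib_mat_vec[of _ n n] mult_mat_vec[OF Tc u] TTu)
  also have "\<dots> = (- complex_of_real s) \<cdot>\<^sub>v y"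
    using carrier_vecD[OF Tu] carrier_vecD[OF u] by (intro eq_vecI) (auto simp: y_def algebra_simps)
  finally have "(T *\<^sub>v y) \<bullet>c y = - complex_of_real s * (y \<bullet>c y)"
    by (simp add: cscalar_prod_smult_left[OF y y])
  moreover have "0 \<le> Re ((T *\<^sub>v y) \<bullet>c y)" using T y by (simp add: psd_mat_def)
  ultimately have "Re (y \<bullet>c y) \<le> 0" using s by (simp add: mult_le_0_iff)
  then have "y = 0\<^sub>v n"
    using cscalar_prod_self_pos[OF y] by fastforce
  show ?thesis
  proof (rule eq_vecI)
    fix i assume "i < dim_vec (complex_of_real s \<cdot>\<^sub>v u)"
    then have i: "i < n" using u by simp
    then have "y $ i = 0" using \<open>y = 0\<^sub>v n\<close> by simp
    then show "(T *\<^sub>v u) $ i = (complex_of_real s \<cdot>\<^sub>v u) $ i"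
      using i carrier_vecD[OF Tu] carrier_vecD[OF u] by (simp add: y_def)
  qed (use Tc u in simp)
qed

lemma psd_sqrt_spectral_mat:
  assumes U: "unitary_mat n U" and s: "\<And>l. l < n \<Longrightarrow> 0 < s l"
  shows "psd_sqrt n (spectral_mat n U (\<lambda>i. complex_of_real (s i * s i)))
    = spectral_mat n U (\<lambda>i. complex_of_real (s i))"
  unfolding psd_sqrt_def
proof (rule the_equality)
  let ?S = "spectral_mat n U (\<lambda>i. complex_of_real (s i))"
  let ?A = "spectral_mat n U (\<lambda>i. complex_of_real (s i * s i))"
  note unitaryU = unitary_matD[OF U]
  show "psd_mat n ?S \<and> ?S * ?S = ?A"
    using s by (simp add: psd_spectral_mat_iff[OF U] spectral_mat_mult[OF U] less_imp_le)
  fix T assume "psd_mat n T \<and> T * T = ?A"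
  then have T: "psd_mat n T" and TT: "T * T = ?A" by auto
  have Tc: "T \<in> carrier_mat n n" by (rule psd_mat_carrier[OF T])
  have "col (T * U) l = col (?S * U) l" if l: "l < n" for l
  proof -
    have c: "col U l \<in> carrier_vec n" using unitaryU l by simp
    have "T *\<^sub>v (T *\<^sub>v col U l) = complex_of_real (s l * s l) \<cdot>\<^sub>v col U l"
      using assoc_mult_mat_vec[OF Tc Tc c] TT spectral_mat_col_eigenvector[OF U l] by simp
    then have eigen: "T *\<^sub>v col U l = ?S *\<^sub>v col U l"
      using psd_square_eigenvector[OF T c s[OF l]] spectral_mat_col_eigenvector[OF U l] by simp
    have "col (T * U) l = T *\<^sub>v col U l" by (rule col_mult2[OF Tc unitaryU(1) l])
    also have "\<dots> = ?S *\<^sub>v col U l" by (fact eigen)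
    also have "\<dots> = col (?S * U) l" by (rule col_mult2[OF spectral_mat_carrier[OF U] unitaryU(1) l, symmetric])
    finally show ?thesis .
  qed
  then have "T * U = ?S * U"
    using Tc unitaryU spectral_mat_dim[OF U] by (intro mat_col_eqI) auto
  have "T = T * U * adjoint_mat U" using Tc by (intro unitary_cancel_right[OF U, symmetric]) auto
  also have "\<dots> = ?S * U * adjoint_mat U" by (simp only: \<open>T * U = ?S * U\<close>)
  also have "\<dots> = ?S" by (intro unitary_cancel_right[OF U]) (simp add: spectral_mat_dim[OF U])
  finally show "T = ?S" .
qed

lemma inverse_mat_eqI:
  assumes A: "A \<in> carrier_mat n n" and B: "B \<in> carrier_mat n n"
    and AB: "A * B = 1\<^sub>m n" and BA: "B * A = 1\<^sub>m n"
  shows "inverse_mat n A = B"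
  unfolding inverse_mat_def
proof (rule the_equality)
  fix C assume "C \<in> carrier_mat n n \<and> A * C = 1\<^sub>m n \<and> C * A = 1\<^sub>m n"
  then have C: "C \<in> carrier_mat n n" and CA: "C * A = 1\<^sub>m n" by auto
  have "C = C * (A * B)" using C by (simp add: AB)
  also have "\<dots> = (C * A) * B" using C A B by (intro assoc_mult_mat[symmetric]) auto
  finally show "C = B" using B by (simp add: CA)
qed (use assms in blast)

lemma inverse_mat_spectral_mat:
  assumes U: "unitary_mat n U" and f: "\<And>l. l < n \<Longrightarrow> f l \<noteq> 0"
  shows "inverse_mat n (spectral_mat n U f) = spectral_mat n U (\<lambda>i. inverse (f i))"
proof (rule inverse_mat_eqI)
  have "spectral_mat n U (\<lambda>i. f i * inverse (f i)) = 1\<^sub>m n"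
    "spectral_mat n U (\<lambda>i. inverse (f i) * f i) = 1\<^sub>m n"
    using f by (simp_all add: spectral_mat_cong[OF U, of _ "\<lambda>_. 1"] spectral_mat_one[OF U])
  then show "spectral_mat n U f * spectral_mat n U (\<lambda>i. inverse (f i)) = 1\<^sub>m n"
    "spectral_mat n U (\<lambda>i. inverse (f i)) * spectral_mat n U f = 1\<^sub>m n"
    by (simp_all add: spectral_mat_mult[OF U])
qed (simp_all add: U)

section \<open>Gibbs states\<close>

lemma gibbs_state_spectral:
  assumes H: "hermitian_mat n H" and n: "0 < n"
  obtains U g where "unitary_mat n U" "\<And>l. 0 < g l" "(\<Sum>l<n. g l) = 1"
    "gibbs_state \<beta> H = spectral_mat n U (\<lambda>i. complex_of_real (g i))"
proof -
  obtain U h where U: "unitary_mat n U" and Hh: "H = spectral_mat n U (\<lambda>i. complex_of_real (h i))"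
    using hermitian_spectral_decomposition[OF H] by blast
  define Z where "Z = (\<Sum>l<n. exp (- \<beta> * h l))"
  have Z: "0 < Z" unfolding Z_def using n by (intro sum_pos) auto
  have E: "exp_mat ((- complex_of_real \<beta>) \<cdot>\<^sub>m H) = spectral_mat n U (\<lambda>i. complex_of_real (exp (- \<beta> * h i)))"
    by (simp add: Hh spectral_mat_smult[OF U] spectral_mat_exp[OF U] exp_of_real[symmetric])
  have gibbs: "gibbs_state \<beta> H = spectral_mat n U (\<lambda>i. complex_of_real (exp (- \<beta> * h i) / Z))"
    by (simp add: gibbs_state_def E spectral_mat_trace[OF U] spectral_mat_smult[OF U] Z_def
        flip: of_real_sum)
  have sum_one: "(\<Sum>l<n. exp (- \<beta> * h l) / Z) = 1"
    using Z by (simp add: Z_def flip: sum_divide_distrib)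
  have pos: "0 < exp (- \<beta> * h l) / Z" for l using Z by simp
  show ?thesis by (rule that[OF U, of "\<lambda>l. exp (- \<beta> * h l) / Z", OF pos sum_one gibbs])
qed

lemma density_mat_gibbs_state:
  assumes "hermitian_mat n H" "0 < n"
  shows "density_mat n (gibbs_state \<beta> H)"
proof -
  obtain U g where U: "unitary_mat n U" and g: "\<And>l. 0 < g l" "(\<Sum>l<n. g l) = 1"
    and G: "gibbs_state \<beta> H = spectral_mat n U (\<lambda>i. complex_of_real (g i))"
    using gibbs_state_spectral[OF assms] by blast
  show ?thesis
    using g by (simp add: density_mat_def G psd_spectral_mat_iff[OF U] spectral_mat_trace[OF U]
        less_imp_le flip: of_real_sum)
qed

lemma psd_minus_smult_gibbs_state_iff:
  fixes \<beta> :: real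
  assumes H: "hermitian_mat n H" and n: "0 < n" and \<rho>: "hermitian_mat n \<rho>"
  defines "\<gamma> \<equiv> gibbs_state \<beta> H"
  shows "psd_mat n (\<rho> - complex_of_real c \<cdot>\<^sub>m \<gamma>)
    \<longleftrightarrow> c \<le> min_eigenvalue (psd_sqrt n (inverse_mat n \<gamma>) * \<rho> * psd_sqrt n (inverse_mat n \<gamma>))"
proof -
  obtain U g where U: "unitary_mat n U" and g: "\<And>l. 0 < g l"
    and G: "\<gamma> = spectral_mat n U (\<lambda>i. complex_of_real (g i))"
    using gibbs_state_spectral[OF H n] unfolding \<gamma>_def by blast
  define R where "R = spectral_mat n U (\<lambda>i. complex_of_real (sqrt (g i)))"
  define S where "S = spectral_mat n U (\<lambda>i. complex_of_real (1 / sqrt (g i)))"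
  have herm: "hermitian_mat n R" "hermitian_mat n S"
    unfolding R_def S_def by (rule hermitian_spectral_mat[OF U])+
  have "R * S = spectral_mat n U (\<lambda>_. 1)" "S * R = spectral_mat n U (\<lambda>_. 1)"
    unfolding R_def S_def spectral_mat_mult[OF U] using g
    by (auto intro!: spectral_mat_cong[OF U] simp: less_imp_neq[symmetric] simp flip: of_real_mult)
  then have RS: "R * S = 1\<^sub>m n" "S * R = 1\<^sub>m n" by (simp_all add: spectral_mat_one[OF U])
  have RR: "R * R = \<gamma>"
    unfolding R_def G spectral_mat_mult[OF U] using g
    by (auto intro!: spectral_mat_cong[OF U] simp: less_imp_le simp flip: of_real_mult)
  have "inverse_mat n \<gamma> = spectral_mat n U (\<lambda>i. inverse (complex_of_real (g i)))"
    unfolding G using g by (intro inverse_mat_spectral_mat[OF U]) (simp add: less_imp_neq[symmetric])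
  also have "\<dots> = spectral_mat n U (\<lambda>i. complex_of_real (1 / sqrt (g i) * (1 / sqrt (g i))))"
    using g by (intro spectral_mat_cong[OF U])
      (simp add: less_imp_le divide_inverse flip: of_real_inverse inverse_mult_distrib)
  finally have "psd_sqrt n (inverse_mat n \<gamma>) = S"
    unfolding S_def by (simp only: psd_sqrt_spectral_mat[OF U] g real_sqrt_gt_zero zero_less_divide_1_iff)
  then show ?thesis using psd_minus_smult_square_iff[OF herm RS \<rho> n] RR by simp
qed

section \<open>The weight of athermality\<close>

lemma athermality_set_imp_psd:
  assumes b: "b \<in> athermality_set n \<gamma> \<rho>" and \<gamma>: "\<gamma> \<in> carrier_mat n n"
  shows "psd_mat n (\<rho> - complex_of_real (1 - b) \<cdot>\<^sub>m \<gamma>)"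
proof -
  obtain \<tau> where "0 \<le> b" "density_mat n \<tau>"
    and \<rho>: "\<rho> = complex_of_real (1 - b) \<cdot>\<^sub>m \<gamma> + complex_of_real b \<cdot>\<^sub>m \<tau>"
    using b unfolding athermality_set_def by blast
  moreover have "\<tau> \<in> carrier_mat n n" using \<open>density_mat n \<tau>\<close> by (simp add: density_mat_def psd_mat_carrier)
  then have "\<rho> - complex_of_real (1 - b) \<cdot>\<^sub>m \<gamma> = complex_of_real b \<cdot>\<^sub>m \<tau>"
    unfolding \<rho> using \<gamma> by (intro eq_matI) auto
  ultimately show ?thesis by (simp add: psd_mat_smult density_mat_def)
qed

lemma athermality_decomposition_iff:
  assumes b: "b \<noteq> 0" and carriers: "\<rho> \<in> carrier_mat n n" "\<gamma> \<in> carrier_mat n n" "\<tau> \<in> carrier_mat n n"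
  shows "\<rho> = complex_of_real (1 - b) \<cdot>\<^sub>m \<gamma> + complex_of_real b \<cdot>\<^sub>m \<tau>
    \<longleftrightarrow> \<tau> = complex_of_real (1 / b) \<cdot>\<^sub>m (\<rho> - complex_of_real (1 - b) \<cdot>\<^sub>m \<gamma>)"
proof
  assume "\<rho> = complex_of_real (1 - b) \<cdot>\<^sub>m \<gamma> + complex_of_real b \<cdot>\<^sub>m \<tau>"
  then show "\<tau> = complex_of_real (1 / b) \<cdot>\<^sub>m (\<rho> - complex_of_real (1 - b) \<cdot>\<^sub>m \<gamma>)"
    using carriers b by (intro eq_matI) (auto simp: field_simps)
next
  assume "\<tau> = complex_of_real (1 / b) \<cdot>\<^sub>m (\<rho> - complex_of_real (1 - b) \<cdot>\<^sub>m \<gamma>)"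
  then show "\<rho> = complex_of_real (1 - b) \<cdot>\<^sub>m \<gamma> + complex_of_real b \<cdot>\<^sub>m \<tau>"
    using carriers b by (intro eq_matI) (auto simp: algebra_simps)
qed

lemma density_mat_athermality_residual:
  assumes \<rho>: "density_mat n \<rho>" and \<gamma>: "density_mat n \<gamma>" and b: "0 < b"
    and psd: "psd_mat n (\<rho> - complex_of_real (1 - b) \<cdot>\<^sub>m \<gamma>)"
  shows "density_mat n (complex_of_real (1 / b) \<cdot>\<^sub>m (\<rho> - complex_of_real (1 - b) \<cdot>\<^sub>m \<gamma>))"
proof -
  have c: "\<rho> \<in> carrier_mat n n" "\<gamma> \<in> carrier_mat n n"
    using \<rho> \<gamma> by (simp_all add: density_mat_def psd_mat_carrier)
  have "trace_mat (complex_of_real (1 / b) \<cdot>\<^sub>m (\<rho> - complex_of_real (1 - b) \<cdot>\<^sub>m \<gamma>))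
      = complex_of_real (1 / b) * (trace_mat \<rho> - complex_of_real (1 - b) * trace_mat \<gamma>)"
    using c trace_mat_smult[OF minus_carrier_mat[OF smult_carrier_mat[OF c(2)]]]
    by (simp add: trace_mat_diff[OF c(1) smult_carrier_mat[OF c(2)]] trace_mat_smult[OF c(2)])
  also have "\<dots> = 1" using \<rho> \<gamma> b by (simp add: density_mat_def field_simps)
  finally show ?thesis using psd_mat_smult[OF _ psd, of "1 / b"] b by (simp add: density_mat_def)
qed

lemma athermality_decomposition_unique:
  assumes \<rho>: "density_mat n \<rho>" and \<gamma>: "density_mat n \<gamma>" and b: "0 < b"
    and psd: "psd_mat n (\<rho> - complex_of_real (1 - b) \<cdot>\<^sub>m \<gamma>)"
  shows "density_mat n \<tau> \<and> \<rho> = complex_of_real (1 - b) \<cdot>\<^sub>m \<gamma> + complex_of_real b \<cdot>\<^sub>m \<tau>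
    \<longleftrightarrow> \<tau> = complex_of_real (1 / b) \<cdot>\<^sub>m (\<rho> - complex_of_real (1 - b) \<cdot>\<^sub>m \<gamma>)"
  using athermality_decomposition_iff[of b \<rho> n \<gamma> \<tau>] density_mat_athermality_residual[OF assms] b \<rho> \<gamma>
  by (auto simp: density_mat_def psd_mat_carrier)

lemma athermality_threshold_bounds:
  assumes \<rho>: "density_mat n \<rho>" and \<gamma>: "density_mat n \<gamma>"
    and threshold: "\<And>c. psd_mat n (\<rho> - complex_of_real c \<cdot>\<^sub>m \<gamma>) \<longleftrightarrow> c \<le> \<mu>"
  shows "0 \<le> \<mu>" "\<mu> \<le> 1" "\<mu> = 1 \<longleftrightarrow> \<rho> = \<gamma>"
proof -
  have c: "\<rho> \<in> carrier_mat n n" "\<gamma> \<in> carrier_mat n n"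
    using \<rho> \<gamma> by (simp_all add: density_mat_def psd_mat_carrier)
  have tr: "trace_mat (\<rho> - complex_of_real c \<cdot>\<^sub>m \<gamma>) = complex_of_real (1 - c)" for c
    using \<rho> \<gamma> by (simp add: trace_mat_diff[OF c(1) smult_carrier_mat[OF c(2)]] trace_mat_smult[OF c(2)]
        density_mat_def)
  have "\<rho> - complex_of_real 0 \<cdot>\<^sub>m \<gamma> = \<rho>" using c by (intro eq_matI) auto
  then show "0 \<le> \<mu>" using threshold[of 0] \<rho> by (simp add: density_mat_def)
  show "\<mu> \<le> 1" using psd_mat_trace(1)[of n "\<rho> - complex_of_real \<mu> \<cdot>\<^sub>m \<gamma>"] threshold tr by simp
  show "\<mu> = 1 \<longleftrightarrow> \<rho> = \<gamma>"
  proof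
    assume "\<mu> = 1"
    then have zero: "\<rho> - complex_of_real 1 \<cdot>\<^sub>m \<gamma> = 0\<^sub>m n n"
      using psd_mat_trace(2)[of n "\<rho> - complex_of_real 1 \<cdot>\<^sub>m \<gamma>"] threshold[of 1] tr[of 1] by simp
    show "\<rho> = \<gamma>"
    proof (rule eq_matI)
      fix i j assume "i < dim_row \<gamma>" "j < dim_col \<gamma>"
      then show "\<rho> $$ (i,j) = \<gamma> $$ (i,j)"
        using arg_cong[OF zero, of "\<lambda>M. M $$ (i,j)"] c by simp
    qed (use c in auto)
  next
    assume "\<rho> = \<gamma>"
    then have "\<rho> - complex_of_real 1 \<cdot>\<^sub>m \<gamma> = complex_of_real 0 \<cdot>\<^sub>m \<rho>" using c by (intro eq_matI) auto
    then have "1 \<le> \<mu>" using threshold[of 1] psd_mat_smult[of 0 n \<rho>] \<rho> by (simp add: density_mat_def)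
    then show "\<mu> = 1" using \<open>\<mu> \<le> 1\<close> by simp
  qed
qed

lemma athermality_threshold:
  assumes \<rho>: "density_mat n \<rho>" and \<gamma>: "density_mat n \<gamma>"
    and threshold: "\<And>c. psd_mat n (\<rho> - complex_of_real c \<cdot>\<^sub>m \<gamma>) \<longleftrightarrow> c \<le> \<mu>"
  shows "1 - \<mu> \<in> athermality_set n \<gamma> \<rho>" "\<forall>b \<in> athermality_set n \<gamma> \<rho>. 1 - \<mu> \<le> b"
proof -
  note bounds = athermality_threshold_bounds[OF assms]
  have \<gamma>c: "\<gamma> \<in> carrier_mat n n" using \<gamma> by (simp add: density_mat_def psd_mat_carrier)
  show "\<forall>b \<in> athermality_set n \<gamma> \<rho>. 1 - \<mu> \<le> b"
  proof
    fix b assume "b \<in> athermality_set n \<gamma> \<rho>"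
    then have "1 - b \<le> \<mu>" using athermality_set_imp_psd[OF _ \<gamma>c] threshold by blast
    then show "1 - \<mu> \<le> b" by simp
  qed
  show "1 - \<mu> \<in> athermality_set n \<gamma> \<rho>"
  proof (cases "\<rho> = \<gamma>")
    case True
    then have "\<rho> = complex_of_real (1 - 0) \<cdot>\<^sub>m \<gamma> + complex_of_real 0 \<cdot>\<^sub>m \<gamma>" using \<gamma>c by (intro eq_matI) auto
    then show ?thesis using bounds True \<gamma> by (auto simp: athermality_set_def)
  next
    case False
    then have pos: "0 < 1 - \<mu>" using bounds by simp
    have "psd_mat n (\<rho> - complex_of_real (1 - (1 - \<mu>)) \<cdot>\<^sub>m \<gamma>)" using threshold by simp
    from athermality_decomposition_unique[OF \<rho> \<gamma> pos this] show ?thesis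
      using pos by (auto simp: athermality_set_def)
  qed
qed

theorem mainTheorem1:
  fixes n :: nat and H \<rho> :: "complex mat" and \<beta> :: real
  assumes "0 < n"
    and "hermitian_mat n H"
    and "\<beta> \<noteq> 0"
    and "density_mat n \<rho>"
  defines "\<gamma> \<equiv> gibbs_state \<beta> H"
  defines "a \<equiv> 1 - min_eigenvalue
             (psd_sqrt n (inverse_mat n \<gamma>) * \<rho> * psd_sqrt n (inverse_mat n \<gamma>))"
  shows "a \<in> athermality_set n \<gamma> \<rho> \<and> (\<forall>b \<in> athermality_set n \<gamma> \<rho>. a \<le> b)
       \<and> weight_of_athermality n \<beta> H \<rho> = a
       \<and> 0 \<le> a \<and> a \<le> 1
       \<and> (a = 0 \<longleftrightarrow> \<rho> = \<gamma>)
       \<and> (\<rho> \<noteq> \<gamma> \<longrightarrow>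
            (\<forall>\<tau>. (density_mat n \<tau> \<and>
                   \<rho> = complex_of_real (1 - a) \<cdot>\<^sub>m \<gamma> + complex_of_real a \<cdot>\<^sub>m \<tau>)
                 \<longleftrightarrow> \<tau> = complex_of_real (1 / a) \<cdot>\<^sub>m (\<rho> - complex_of_real (1 - a) \<cdot>\<^sub>m \<gamma>)))"
proof -
  have \<gamma>: "density_mat n \<gamma>" unfolding \<gamma>_def by (rule density_mat_gibbs_state[OF assms(2,1)])
  have \<rho>: "hermitian_mat n \<rho>" using assms(4) by (simp add: density_mat_def psd_mat_def)
  note threshold = psd_minus_smult_gibbs_state_iff[OF assms(2,1) \<rho>, where \<beta> = \<beta>, folded \<gamma>_def]
  note bounds = athermality_threshold_bounds[OF assms(4) \<gamma> threshold]
  note minimal = athermality_threshold[OF assms(4) \<gamma> threshold, folded a_def]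
  have weight: "weight_of_athermality n \<beta> H \<rho> = a"
    unfolding weight_of_athermality_def \<gamma>_def[symmetric] using minimal by (intro cInf_eq_minimum) auto
  have "(density_mat n \<tau> \<and> \<rho> = complex_of_real (1 - a) \<cdot>\<^sub>m \<gamma> + complex_of_real a \<cdot>\<^sub>m \<tau>)
      \<longleftrightarrow> \<tau> = complex_of_real (1 / a) \<cdot>\<^sub>m (\<rho> - complex_of_real (1 - a) \<cdot>\<^sub>m \<gamma>)"
    if "\<rho> \<noteq> \<gamma>" for \<tau>
    using athermality_decomposition_unique[OF assms(4) \<gamma>, of a] bounds threshold that
    by (simp add: a_def)
  then show ?thesis using bounds minimal weight by (auto simp: a_def)
qed

end
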